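(* Let $(C,\delta)$ be an $N$-codifferential graded coalgebra. Then: 1. $\mathrm{End}(C)$, with composition as product and differential $d(f)=\delta\circ f-(-1)^{\bar f}f\circ\delta$, is a $(2N-1)$-differential graded algebra. 2. $\mathrm{Coder}(C)\subseteq\mathrm{End}(C)$, with the graded commutator $[f,g]=f\circ g-(-1)^{\bar f\bar g}g\circ f$ and the same $d$, is a $(2N-1)$-differential graded Lie algebra.
   Context: All vector spaces are $\mathbb{Z}$-graded over a field $k$ of characteristic zero, and $\bar f$ denotes degree. A graded coalgebra is a graded vector space $C$ with a degree-zero coassociative map $\Delta:C\to C\otimes C$. A coderivation of $C$ is a linear map $\delta:C\to C$ with $\Delta\circ\delta=(1\otimes\delta+\delta\otimes1)\circ\Delta$, using Koszul signs. $\mathrm{Coder}(C)$ denotes the space of coderivations. An $N$-codifferential graded coalgebra is a pair $(C,\delta)$ where $C$ is a graded coalgebra and $\delta$ is a degree-one coderivation with $\delta^N=0$. $\mathrm{End}(C)$ is the graded space of graded linear endomorphisms of $C$. A $K$-differential graded algebra is a graded associative algebra with a degree-one map $d$ satisfying $d(ab)=d(a)b+(-1)^{\bar a}a\,d(b)$ and $d^K=0$. A $K$-differential graded Lie algebra is a graded Lie algebra with a degree-one map $d$ satisfying $d[a,b]=[da,b]+(-1)^{\bar a}[a,db]$ and $d^K=0$. *)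

theory Defs
  imports Main "HOL-Library.Poly_Mapping" "HOL-Library.Function_Algebras"
begin

text \<open>A graded vector space is modelled by a homogeneous basis: the space with basis
  the type 'i and degree function w on basis vectors is the space of finitely
  supported functions 'i \<Rightarrow>0 'k.  Every graded vector space over a field is isomorphic
  to one of this form.\<close>

definition smult :: "'k::field \<Rightarrow> ('i \<Rightarrow>\<^sub>0 'k) \<Rightarrow> ('i \<Rightarrow>\<^sub>0 'k)" where
  "smult c v = Poly_Mapping.map (\<lambda>a. c * a) v"

definition bvec :: "'i \<Rightarrow> ('i \<Rightarrow>\<^sub>0 'k::field)" where
  "bvec i = Poly_Mapping.single i 1"

definition hom :: "('i \<Rightarrow> int) \<Rightarrow> int \<Rightarrow> ('i \<Rightarrow>\<^sub>0 'k::field) set" where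
  "hom w n = {v. \<forall>i\<in>Poly_Mapping.keys v. w i = n}"

definition klinear :: "(('i \<Rightarrow>\<^sub>0 'k::field) \<Rightarrow> ('j \<Rightarrow>\<^sub>0 'k)) \<Rightarrow> bool" where
  "klinear f \<longleftrightarrow> (\<forall>x y. f (x + y) = f x + f y) \<and> (\<forall>c x. f (smult c x) = smult c (f x))"

definition lin_ext :: "('i \<Rightarrow> ('j \<Rightarrow>\<^sub>0 'k::field)) \<Rightarrow> ('i \<Rightarrow>\<^sub>0 'k) \<Rightarrow> ('j \<Rightarrow>\<^sub>0 'k)" where
  "lin_ext g v = (\<Sum>i\<in>Poly_Mapping.keys v. smult (Poly_Mapping.lookup v i) (g i))"

text \<open>Tensor product of vectors: the tensor product of the free spaces on 'i and 'j is the
  free space on 'i \<times> 'j, with degree of (a,b) the sum of the degrees.\<close>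
definition tensor :: "('i \<Rightarrow>\<^sub>0 'k::field) \<Rightarrow> ('j \<Rightarrow>\<^sub>0 'k) \<Rightarrow> ('i \<times> 'j \<Rightarrow>\<^sub>0 'k)" where
  "tensor x y = (\<Sum>a\<in>Poly_Mapping.keys x. \<Sum>b\<in>Poly_Mapping.keys y.
                    Poly_Mapping.single (a, b) (Poly_Mapping.lookup x a * Poly_Mapping.lookup y b))"

definition psign :: "int \<Rightarrow> 'k::field" where
  "psign p = (if even p then 1 else - 1)"

text \<open>Tensor product of linear maps with the Koszul sign:
  (f \<otimes> g)(x \<otimes> y) = (-1)^(deg g * deg x) f x \<otimes> g y, where q = deg g and w is the
  degree function on the basis of the first factor.\<close>
definition tmap :: "('i \<Rightarrow> int) \<Rightarrow> int \<Rightarrow> (('i \<Rightarrow>\<^sub>0 'k::field) \<Rightarrow> ('i2 \<Rightarrow>\<^sub>0 'k))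
     \<Rightarrow> (('j \<Rightarrow>\<^sub>0 'k) \<Rightarrow> ('j2 \<Rightarrow>\<^sub>0 'k)) \<Rightarrow> ('i \<times> 'j \<Rightarrow>\<^sub>0 'k) \<Rightarrow> ('i2 \<times> 'j2 \<Rightarrow>\<^sub>0 'k)" where
  "tmap w q f g = lin_ext (\<lambda>(a, b). smult (psign (q * w a)) (tensor (f (bvec a)) (g (bvec b))))"

definition assoc3 :: "('a \<times> ('b \<times> 'c) \<Rightarrow>\<^sub>0 'k::field) \<Rightarrow> (('a \<times> 'b) \<times> 'c \<Rightarrow>\<^sub>0 'k)" where
  "assoc3 = lin_ext (\<lambda>(a, (b, c)). bvec ((a, b), c))"

definition graded_coalgebra :: "('b \<Rightarrow> int) \<Rightarrow> (('b \<Rightarrow>\<^sub>0 'k::field) \<Rightarrow> ('b \<times> 'b \<Rightarrow>\<^sub>0 'k)) \<Rightarrow> bool" where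
  "graded_coalgebra bdeg Delta \<longleftrightarrow>
     klinear Delta \<and>
     (\<forall>n x. x \<in> hom bdeg n \<longrightarrow> Delta x \<in> hom (\<lambda>(a, b). bdeg a + bdeg b) n) \<and>
     (\<forall>x. tmap bdeg 0 Delta id (Delta x)
            = assoc3 (tmap bdeg 0 id Delta (Delta x)))"

definition EndH :: "('b \<Rightarrow> int) \<Rightarrow> int \<Rightarrow> (('b \<Rightarrow>\<^sub>0 'k::field) \<Rightarrow> ('b \<Rightarrow>\<^sub>0 'k)) set" where
  "EndH bdeg p = {f. klinear f \<and> (\<forall>n x. x \<in> hom bdeg n \<longrightarrow> f x \<in> hom bdeg (n + p))}"

text \<open>Homogeneous coderivations of degree p:
  Delta \<circ> f = (1 \<otimes> f + f \<otimes> 1) \<circ> Delta with Koszul signs.\<close>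
definition Coder :: "('b \<Rightarrow> int) \<Rightarrow> (('b \<Rightarrow>\<^sub>0 'k::field) \<Rightarrow> ('b \<times> 'b \<Rightarrow>\<^sub>0 'k)) \<Rightarrow> int
     \<Rightarrow> (('b \<Rightarrow>\<^sub>0 'k) \<Rightarrow> ('b \<Rightarrow>\<^sub>0 'k)) set" where
  "Coder bdeg Delta p = {f \<in> EndH bdeg p.
      \<forall>x. Delta (f x) = tmap bdeg p id f (Delta x) + tmap bdeg 0 f id (Delta x)}"

definition N_codifferential :: "('b \<Rightarrow> int) \<Rightarrow> (('b \<Rightarrow>\<^sub>0 'k::field) \<Rightarrow> ('b \<times> 'b \<Rightarrow>\<^sub>0 'k))
     \<Rightarrow> (('b \<Rightarrow>\<^sub>0 'k) \<Rightarrow> ('b \<Rightarrow>\<^sub>0 'k)) \<Rightarrow> nat \<Rightarrow> bool" where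
  "N_codifferential bdeg Delta delta N \<longleftrightarrow>
     graded_coalgebra bdeg Delta \<and> delta \<in> Coder bdeg Delta 1 \<and> (delta ^^ N) = (\<lambda>x. 0)"

definition End_scale :: "'k::field \<Rightarrow> (('b \<Rightarrow>\<^sub>0 'k) \<Rightarrow> ('b \<Rightarrow>\<^sub>0 'k)) \<Rightarrow> (('b \<Rightarrow>\<^sub>0 'k) \<Rightarrow> ('b \<Rightarrow>\<^sub>0 'k))" where
  "End_scale c f = (\<lambda>x. smult c (f x))"

definition End_d :: "(('b \<Rightarrow>\<^sub>0 'k::field) \<Rightarrow> ('b \<Rightarrow>\<^sub>0 'k)) \<Rightarrow> int
     \<Rightarrow> (('b \<Rightarrow>\<^sub>0 'k) \<Rightarrow> ('b \<Rightarrow>\<^sub>0 'k)) \<Rightarrow> (('b \<Rightarrow>\<^sub>0 'k) \<Rightarrow> ('b \<Rightarrow>\<^sub>0 'k))" where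
  "End_d delta p f = (\<lambda>x. delta (f x) - smult (psign p) (f (delta x)))"

definition End_bracket :: "int \<Rightarrow> int \<Rightarrow> (('b \<Rightarrow>\<^sub>0 'k::field) \<Rightarrow> ('b \<Rightarrow>\<^sub>0 'k))
     \<Rightarrow> (('b \<Rightarrow>\<^sub>0 'k) \<Rightarrow> ('b \<Rightarrow>\<^sub>0 'k)) \<Rightarrow> (('b \<Rightarrow>\<^sub>0 'k) \<Rightarrow> ('b \<Rightarrow>\<^sub>0 'k))" where
  "End_bracket p q f g = (\<lambda>x. f (g x) - smult (psign (p * q)) (g (f x)))"

text \<open>A graded vector space given by its homogeneous components H p (p \<in> int),
  sitting inside an ambient abelian group 'a with scalar action sc; the
  components are subspaces and their sum is direct.  All structure maps below are
  specified on homogeneous elements (they extend uniquely by linearity to the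
  direct sum); maps that depend on degrees take the degrees as arguments.\<close>
definition graded_space :: "('k::field \<Rightarrow> 'a::ab_group_add \<Rightarrow> 'a) \<Rightarrow> (int \<Rightarrow> 'a set) \<Rightarrow> bool" where
  "graded_space sc H \<longleftrightarrow>
     (\<forall>p. 0 \<in> H p \<and> (\<forall>a\<in>H p. \<forall>b\<in>H p. a + b \<in> H p) \<and> (\<forall>c. \<forall>a\<in>H p. sc c a \<in> H p)) \<and>
     (\<forall>p. \<forall>a\<in>H p. \<forall>b\<in>H p. \<forall>c c'.
         sc c (a + b) = sc c a + sc c b \<and> sc (c + c') a = sc c a + sc c' a \<and>
         sc (c * c') a = sc c (sc c' a) \<and> sc 1 a = a) \<and>
     (\<forall>S (v :: int \<Rightarrow> 'a). finite S \<longrightarrow> (\<forall>p\<in>S. v p \<in> H p) \<longrightarrow> sum v S = 0 \<longrightarrow> (\<forall>p\<in>S. v p = 0))"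

primrec diter :: "(int \<Rightarrow> 'a \<Rightarrow> 'a) \<Rightarrow> nat \<Rightarrow> int \<Rightarrow> 'a \<Rightarrow> 'a" where
  "diter d 0 p a = a"
| "diter d (Suc k) p a = d (p + int k) (diter d k p a)"

definition K_differential :: "('k::field \<Rightarrow> 'a::ab_group_add \<Rightarrow> 'a) \<Rightarrow> (int \<Rightarrow> 'a set)
     \<Rightarrow> (int \<Rightarrow> 'a \<Rightarrow> 'a) \<Rightarrow> nat \<Rightarrow> bool" where
  "K_differential sc H d K \<longleftrightarrow>
     (\<forall>p. \<forall>a\<in>H p. d p a \<in> H (p + 1)) \<and>
     (\<forall>p. \<forall>a\<in>H p. \<forall>b\<in>H p. d p (a + b) = d p a + d p b) \<and>
     (\<forall>p c. \<forall>a\<in>H p. d p (sc c a) = sc c (d p a)) \<and>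
     (\<forall>p. \<forall>a\<in>H p. diter d K p a = 0)"

definition K_dga :: "('k::field \<Rightarrow> 'a::ab_group_add \<Rightarrow> 'a) \<Rightarrow> (int \<Rightarrow> 'a set)
     \<Rightarrow> ('a \<Rightarrow> 'a \<Rightarrow> 'a) \<Rightarrow> (int \<Rightarrow> 'a \<Rightarrow> 'a) \<Rightarrow> nat \<Rightarrow> bool" where
  "K_dga sc H m d K \<longleftrightarrow>
     graded_space sc H \<and>
     (\<forall>p q. \<forall>a\<in>H p. \<forall>b\<in>H q. m a b \<in> H (p + q)) \<and>
     (\<forall>p q. \<forall>a\<in>H p. \<forall>a'\<in>H p. \<forall>b\<in>H q. m (a + a') b = m a b + m a' b) \<and>
     (\<forall>p q. \<forall>a\<in>H p. \<forall>b\<in>H q. \<forall>b'\<in>H q. m a (b + b') = m a b + m a b') \<and>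
     (\<forall>p q c. \<forall>a\<in>H p. \<forall>b\<in>H q. m (sc c a) b = sc c (m a b) \<and> m a (sc c b) = sc c (m a b)) \<and>
     (\<forall>p q r. \<forall>a\<in>H p. \<forall>b\<in>H q. \<forall>e\<in>H r. m (m a b) e = m a (m b e)) \<and>
     K_differential sc H d K \<and>
     (\<forall>p q. \<forall>a\<in>H p. \<forall>b\<in>H q.
        d (p + q) (m a b) = m (d p a) b + sc (psign p) (m a (d q b)))"

definition K_dgla :: "('k::field \<Rightarrow> 'a::ab_group_add \<Rightarrow> 'a) \<Rightarrow> (int \<Rightarrow> 'a set)
     \<Rightarrow> (int \<Rightarrow> int \<Rightarrow> 'a \<Rightarrow> 'a \<Rightarrow> 'a) \<Rightarrow> (int \<Rightarrow> 'a \<Rightarrow> 'a) \<Rightarrow> nat \<Rightarrow> bool" where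
  "K_dgla sc H br d K \<longleftrightarrow>
     graded_space sc H \<and>
     (\<forall>p q. \<forall>a\<in>H p. \<forall>b\<in>H q. br p q a b \<in> H (p + q)) \<and>
     (\<forall>p q. \<forall>a\<in>H p. \<forall>a'\<in>H p. \<forall>b\<in>H q. br p q (a + a') b = br p q a b + br p q a' b) \<and>
     (\<forall>p q. \<forall>a\<in>H p. \<forall>b\<in>H q. \<forall>b'\<in>H q. br p q a (b + b') = br p q a b + br p q a b') \<and>
     (\<forall>p q c. \<forall>a\<in>H p. \<forall>b\<in>H q.
        br p q (sc c a) b = sc c (br p q a b) \<and> br p q a (sc c b) = sc c (br p q a b)) \<and>
     (\<forall>p q. \<forall>a\<in>H p. \<forall>b\<in>H q. br p q a b = - sc (psign (p * q)) (br q p b a)) \<and>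
     (\<forall>p q r. \<forall>a\<in>H p. \<forall>b\<in>H q. \<forall>e\<in>H r.
        br p (q + r) a (br q r b e)
          = br (p + q) r (br p q a b) e + sc (psign (p * q)) (br q (p + r) b (br p r a e))) \<and>
     K_differential sc H d K \<and>
     (\<forall>p q. \<forall>a\<in>H p. \<forall>b\<in>H q.
        d (p + q) (br p q a b) = br (p + 1) q (d p a) b + sc (psign p) (br p (q + 1) a (d q b)))"

end

theory Submission
  imports Defs
begin

text \<open>Apart from nilpotency everything is a sign computation.  Composition is associative,
  and d f = \<delta> f - (-1)^p f \<delta> is the graded commutator with the degree-one map \<delta>, hence a
  derivation both of composition and of the graded commutator.  Coderivations are closed
  under the graded commutator by the interchange law
  (1 \<otimes> f) (g \<otimes> 1) = (-1)^(p q) (g \<otimes> 1) (1 \<otimes> f) for f, g of degrees p, q: the mixed terms of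
  \<Delta> f g and \<Delta> g f cancel in the commutator.  For nilpotency, d^k f is a linear combination
  of the maps \<delta>^a f \<delta>^b with a + b = k; for k = 2N - 1 always a \<ge> N or b \<ge> N, so every
  term is killed by \<delta>^N = 0.\<close>

lemma lookup_smult [simp]: "Poly_Mapping.lookup (smult c v) i = c * Poly_Mapping.lookup v i"
  by (simp add: smult_def map.rep_eq when_def)

lemma smult_add: "smult c (u + v) = smult c u + smult c v"
  by (rule poly_mapping_eqI) (simp add: lookup_add algebra_simps)

lemma smult_diff: "smult c (u - v) = smult c u - smult c v"
  by (rule poly_mapping_eqI) (simp add: lookup_minus algebra_simps)

lemma smult_zero [simp]: "smult c 0 = 0"
  by (rule poly_mapping_eqI) simp

lemma smult_0 [simp]: "smult 0 v = 0"
  by (rule poly_mapping_eqI) simp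

lemma smult_1 [simp]: "smult 1 v = v"
  by (rule poly_mapping_eqI) simp

lemma smult_smult [simp]: "smult c (smult d v) = smult (c * d) v"
  by (rule poly_mapping_eqI) simp

lemma smult_minus_left: "smult (- c) v = - smult c v"
  by (rule poly_mapping_eqI) simp

lemma smult_add_left: "smult (c + d) v = smult c v + smult d v"
  by (rule poly_mapping_eqI) (simp add: lookup_add algebra_simps)

lemma smult_sum: "smult c (sum f S) = (\<Sum>i\<in>S. smult c (f i))"
  by (rule poly_mapping_eqI) (simp add: lookup_sum sum_distrib_left)

lemma psign_add: "psign (a + b) = (psign a * psign b :: 'k::field)"
  by (simp add: psign_def)

lemma psign_sq: "psign a * psign a = (1::'k::field)"
  by (simp add: psign_def)

lemma psign_sq_left: "psign a * (psign a * x) = (x::'k::field)"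
  by (simp add: psign_def)

lemma klinearD:
  assumes "klinear f"
  shows "f (x + y) = f x + f y" "f (smult c x) = smult c (f x)" "f 0 = 0"
    "f (x - y) = f x - f y" "f (sum g S) = (\<Sum>i\<in>S. f (g i))"
proof -
  show add: "\<And>x y. f (x + y) = f x + f y" and scale: "\<And>c x. f (smult c x) = smult c (f x)"
    using assms by (simp_all add: klinear_def)
  show zero: "f 0 = 0" using scale[of 0 0] by simp
  have "f (- y) = - f y"
  proof -
    have "f (- y) = f (smult (- 1) y)" by (rule arg_cong[where f = f], rule poly_mapping_eqI) simp
    also have "\<dots> = - f y" by (simp add: scale, rule poly_mapping_eqI) simp
    finally show ?thesis .
  qed
  then show "f (x - y) = f x - f y" using add[of x "- y"] by simp
  show "f (sum g S) = (\<Sum>i\<in>S. f (g i))"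
    by (induction S rule: infinite_finite_induct) (auto simp: zero add)
qed

lemma klinear_comp: "klinear f \<Longrightarrow> klinear g \<Longrightarrow> klinear (\<lambda>x. f (g x))"
  by (simp add: klinear_def)

lemma klinear_zero: "klinear (\<lambda>x. 0)"
  by (simp add: klinear_def)

lemma klinear_id: "klinear id"
  by (simp add: klinear_def)

lemma klinear_add: "klinear f \<Longrightarrow> klinear g \<Longrightarrow> klinear (\<lambda>x. f x + g x)"
  by (simp add: klinear_def smult_add)

lemma klinear_diff: "klinear f \<Longrightarrow> klinear g \<Longrightarrow> klinear (\<lambda>x. f x - g x)"
  by (simp add: klinear_def smult_diff)

lemma klinear_scale: "klinear f \<Longrightarrow> klinear (\<lambda>x. smult c (f x))"
  by (simp add: klinear_def smult_add mult.commute)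

lemma klinear_funpow:
  fixes f :: "('i \<Rightarrow>\<^sub>0 'k::field) \<Rightarrow> ('i \<Rightarrow>\<^sub>0 'k)"
  shows "klinear f \<Longrightarrow> klinear (f ^^ n)"
proof (induction n)
  case (Suc n)
  then show ?case using klinear_comp[of f "f ^^ n"] by (simp add: comp_def)
qed (simp add: klinear_id)

lemma bvec_expansion: "(\<Sum>i\<in>Poly_Mapping.keys v. smult (Poly_Mapping.lookup v i) (bvec i)) = v"
proof (rule poly_mapping_eqI)
  fix j
  have "(\<Sum>i\<in>Poly_Mapping.keys v. Poly_Mapping.lookup v i * Poly_Mapping.lookup (bvec i) j)
      = (\<Sum>i\<in>Poly_Mapping.keys v. if i = j then Poly_Mapping.lookup v i else 0)"
    by (rule sum.cong) (auto simp: bvec_def lookup_single when_def)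
  then show "Poly_Mapping.lookup (\<Sum>i\<in>Poly_Mapping.keys v. smult (Poly_Mapping.lookup v i) (bvec i)) j
      = Poly_Mapping.lookup v j"
    by (simp add: lookup_sum in_keys_iff)
qed

lemma klinear_eq_on_bvec:
  assumes "klinear f" "klinear g" "\<And>i. f (bvec i) = g (bvec i)"
  shows "f v = g v"
  using assms by (subst (1 2) bvec_expansion[of v, symmetric]) (simp add: klinearD)

lemma hom_zero [simp]: "0 \<in> hom w n"
  by (simp add: hom_def)

lemma hom_add: "u \<in> hom w n \<Longrightarrow> v \<in> hom w n \<Longrightarrow> u + v \<in> hom w n"
  using keys_add[of u v] by (auto simp: hom_def)

lemma hom_smult: "u \<in> hom w n \<Longrightarrow> smult c u \<in> hom w n"
  by (auto simp: hom_def in_keys_iff)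

lemma hom_uminus: "u \<in> hom w n \<Longrightarrow> - u \<in> hom w n"
  by (auto simp: hom_def in_keys_iff)

lemma hom_diff: "u \<in> hom w n \<Longrightarrow> v \<in> hom w n \<Longrightarrow> u - v \<in> hom w n"
  using hom_add[of u w n "- v"] hom_uminus by fastforce

lemma bvec_hom: "bvec i \<in> hom w (w i)"
  by (simp add: hom_def bvec_def)

lemma hom_direct_sum:
  fixes u :: "int \<Rightarrow> ('i \<Rightarrow>\<^sub>0 'k::field)"
  assumes fin: "finite S" and hom: "\<And>p. p \<in> S \<Longrightarrow> u p \<in> hom w (n + p)" and sum: "sum u S = 0"
    and "p \<in> S"
  shows "u p = 0"
proof (rule poly_mapping_eqI, rule ccontr)
  fix j
  assume nz: "Poly_Mapping.lookup (u p) j \<noteq> Poly_Mapping.lookup 0 j"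
  then have "w j = n + p" using hom[OF \<open>p \<in> S\<close>] by (auto simp: hom_def in_keys_iff)
  then have others: "Poly_Mapping.lookup (u p') j = 0" if "p' \<in> S - {p}" for p'
    using hom[of p'] that by (auto simp: hom_def simp flip: not_in_keys_iff_lookup_eq_zero)
  have "0 = Poly_Mapping.lookup (sum u S) j" by (simp add: sum)
  also have "\<dots> = Poly_Mapping.lookup (u p) j + (\<Sum>p'\<in>S - {p}. Poly_Mapping.lookup (u p') j)"
    by (simp add: lookup_sum lookup_add sum.remove[OF fin \<open>p \<in> S\<close>])
  also have "\<dots> = Poly_Mapping.lookup (u p) j" using others by simp
  finally show False using nz by simp
qed

lemma EndH_lin: "f \<in> EndH w p \<Longrightarrow> klinear f"
  by (simp add: EndH_def)

lemma EndH_hom: "f \<in> EndH w p \<Longrightarrow> x \<in> hom w n \<Longrightarrow> f x \<in> hom w (n + p)"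
  by (simp add: EndH_def)

lemma EndH_comp:
  assumes "f \<in> EndH w p" and "g \<in> EndH w q"
  shows "(\<lambda>x. f (g x)) \<in> EndH w (p + q)"
proof -
  have "f (g x) \<in> hom w (n + (p + q))" if "x \<in> hom w n" for x n
    using EndH_hom[OF assms(1) EndH_hom[OF assms(2) that]] by (simp add: ac_simps)
  then show ?thesis using assms by (simp add: EndH_def klinear_comp)
qed

lemma EndH_zero: "(\<lambda>x. 0) \<in> EndH w p"
  by (simp add: EndH_def klinear_zero)

lemma EndH_add: "f \<in> EndH w p \<Longrightarrow> g \<in> EndH w p \<Longrightarrow> (\<lambda>x. f x + g x) \<in> EndH w p"
  by (simp add: EndH_def klinear_add hom_add)

lemma EndH_diff: "f \<in> EndH w p \<Longrightarrow> g \<in> EndH w p \<Longrightarrow> (\<lambda>x. f x - g x) \<in> EndH w p"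
  by (simp add: EndH_def klinear_diff hom_diff)

lemma EndH_scale: "f \<in> EndH w p \<Longrightarrow> (\<lambda>x. smult c (f x)) \<in> EndH w p"
  by (simp add: EndH_def klinear_scale hom_smult)

lemma sum_fun_apply: "sum v S x = (\<Sum>p\<in>S. v p x)"
  by (induction S rule: infinite_finite_induct) simp_all

lemma EndH_direct_sum:
  assumes fin: "finite S" and hom: "\<forall>p\<in>S. v p \<in> EndH w p" and sum: "sum v S = 0" and "p \<in> S"
  shows "v p = 0"
proof -
  have "v p (bvec i) = 0" for i
  proof (rule hom_direct_sum[OF fin _ _ \<open>p \<in> S\<close>])
    show "v p' (bvec i) \<in> hom w (w i + p')" if "p' \<in> S" for p'
      using EndH_hom[OF bspec[OF hom that] bvec_hom] .
    show "(\<Sum>p\<in>S. v p (bvec i)) = 0"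
      using sum by (simp add: sum_fun_apply[symmetric])
  qed
  then have "v p x = 0" for x
    using klinear_eq_on_bvec[OF EndH_lin[OF bspec[OF hom \<open>p \<in> S\<close>]] klinear_zero] by simp
  then show ?thesis by (simp add: fun_eq_iff)
qed

lemma End_d_EndH: "d \<in> EndH w 1 \<Longrightarrow> f \<in> EndH w p \<Longrightarrow> End_d d p f \<in> EndH w (p + 1)"
  unfolding End_d_def
  using EndH_comp[of d w 1 f p] EndH_comp[of f w p d 1]
  by (intro EndH_diff EndH_scale) (simp_all add: add.commute)

lemma graded_space_EndH_family:
  fixes H :: "int \<Rightarrow> (('b \<Rightarrow>\<^sub>0 'k::field) \<Rightarrow> ('b \<Rightarrow>\<^sub>0 'k)) set"
  assumes sub: "\<And>p. H p \<subseteq> EndH w p" and zero: "\<And>p. (\<lambda>x. 0) \<in> H p"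
    and add: "\<And>p f g. f \<in> H p \<Longrightarrow> g \<in> H p \<Longrightarrow> (\<lambda>x. f x + g x) \<in> H p"
    and scale: "\<And>p c f. f \<in> H p \<Longrightarrow> (\<lambda>x. smult c (f x)) \<in> H p"
  shows "graded_space End_scale H"
  unfolding graded_space_def
proof (intro conjI allI ballI impI)
  fix p
  show "0 \<in> H p" using zero by (simp add: zero_fun_def)
  show "f + g \<in> H p" if "f \<in> H p" "g \<in> H p" for f g using add that by (simp add: plus_fun_def)
  show "End_scale c f \<in> H p" if "f \<in> H p" for c f using scale that by (simp add: End_scale_def)
next
  fix p c c' and f g :: "('b \<Rightarrow>\<^sub>0 'k) \<Rightarrow> ('b \<Rightarrow>\<^sub>0 'k)"
  show "End_scale c (f + g) = End_scale c f + End_scale c g"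
    and "End_scale (c + c') f = End_scale c f + End_scale c' f"
    and "End_scale (c * c') f = End_scale c (End_scale c' f)"
    and "End_scale 1 f = f"
    by (simp_all add: End_scale_def fun_eq_iff smult_add smult_add_left)
next
  fix S and v :: "int \<Rightarrow> ('b \<Rightarrow>\<^sub>0 'k) \<Rightarrow> ('b \<Rightarrow>\<^sub>0 'k)" and p
  assume "finite S" "\<forall>p\<in>S. v p \<in> H p" "sum v S = 0" "p \<in> S"
  then show "v p = 0" using EndH_direct_sum[of S v w p] sub by blast
qed

section \<open>Nilpotency of the differential on End(C)\<close>

inductive_set sandwich_span :: "(('b \<Rightarrow>\<^sub>0 'k::field) \<Rightarrow> ('b \<Rightarrow>\<^sub>0 'k)) \<Rightarrow> (('b \<Rightarrow>\<^sub>0 'k) \<Rightarrow> ('b \<Rightarrow>\<^sub>0 'k))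
    \<Rightarrow> nat \<Rightarrow> (('b \<Rightarrow>\<^sub>0 'k) \<Rightarrow> ('b \<Rightarrow>\<^sub>0 'k)) set"
  for d f k where
  sandwich: "a + b = k \<Longrightarrow> (\<lambda>x. (d ^^ a) (f ((d ^^ b) x))) \<in> sandwich_span d f k"
| add: "g \<in> sandwich_span d f k \<Longrightarrow> h \<in> sandwich_span d f k \<Longrightarrow> (\<lambda>x. g x + h x) \<in> sandwich_span d f k"
| scale: "g \<in> sandwich_span d f k \<Longrightarrow> (\<lambda>x. smult c (g x)) \<in> sandwich_span d f k"

lemma sandwich_span_comp_left:
  assumes "g \<in> sandwich_span d f k" and "klinear d"
  shows "(\<lambda>x. d (g x)) \<in> sandwich_span d f (Suc k)"
  using assms(1)
proof induction
  case (sandwich a b)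
  then have "(\<lambda>x. (d ^^ Suc a) (f ((d ^^ b) x))) \<in> sandwich_span d f (Suc k)"
    by (intro sandwich_span.sandwich) simp
  then show ?case by simp
qed (simp_all add: klinearD[OF \<open>klinear d\<close>] sandwich_span.add sandwich_span.scale)

lemma sandwich_span_comp_right:
  assumes "g \<in> sandwich_span d f k"
  shows "(\<lambda>x. g (d x)) \<in> sandwich_span d f (Suc k)"
  using assms
proof induction
  case (sandwich a b)
  then have "(\<lambda>x. (d ^^ a) (f ((d ^^ Suc b) x))) \<in> sandwich_span d f (Suc k)"
    by (intro sandwich_span.sandwich) simp
  then show ?case by (simp add: funpow_Suc_right del: funpow.simps)
qed (simp_all add: sandwich_span.add sandwich_span.scale)

lemma diter_End_d_sandwich_span:
  assumes "klinear d"
  shows "diter (End_d d) k p f \<in> sandwich_span d f k"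
proof (induction k)
  case 0
  show ?case using sandwich_span.sandwich[of 0 0 0 d f] by simp
next
  case (Suc k)
  let ?g = "diter (End_d d) k p f"
  have "End_d d (p + int k) ?g = (\<lambda>x. d (?g x) + smult (- psign (p + int k)) (?g (d x)))"
    unfolding End_d_def by (auto intro!: poly_mapping_eqI simp: lookup_add lookup_minus)
  then show ?case
    using sandwich_span.add[OF sandwich_span_comp_left[OF Suc assms]
        sandwich_span.scale[OF sandwich_span_comp_right[OF Suc]]]
    by simp
qed

lemma sandwich_span_vanishes:
  assumes "g \<in> sandwich_span d f k" and d: "klinear d" and "klinear f" and nil: "d ^^ N = (\<lambda>x. 0)"
    and k: "\<And>a b. a + b = k \<Longrightarrow> N \<le> a \<or> N \<le> b"
  shows "g = (\<lambda>x. 0)"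
  using assms(1)
proof induction
  case (sandwich a b)
  have dpow_0: "(d ^^ m) x = 0" if "N \<le> m" for m x
  proof -
    have "d ^^ m = d ^^ (m - N) \<circ> d ^^ N" using that by (simp flip: funpow_add)
    then show ?thesis using nil klinearD(3)[OF klinear_funpow[OF d]] by simp
  qed
  from k[OF sandwich] show ?case
    by (auto simp: dpow_0 klinearD(3)[OF \<open>klinear f\<close>] klinearD(3)[OF klinear_funpow[OF d]])
qed simp_all

lemma K_differential_End_d:
  fixes H :: "int \<Rightarrow> (('b \<Rightarrow>\<^sub>0 'k::field) \<Rightarrow> ('b \<Rightarrow>\<^sub>0 'k)) set"
  assumes "d \<in> EndH w 1" and nil: "d ^^ N = (\<lambda>x. 0)" and sub: "\<And>p. H p \<subseteq> EndH w p"
    and closed: "\<And>p f. f \<in> H p \<Longrightarrow> End_d d p f \<in> H (p + 1)"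
  shows "K_differential End_scale H (End_d d) (2 * N - 1)"
  unfolding K_differential_def
proof (intro conjI allI ballI)
  have d: "klinear d" using \<open>d \<in> EndH w 1\<close> EndH_lin by blast
  fix p f assume f: "f \<in> H p"
  then have "klinear f" using sub EndH_lin by blast
  show "End_d d p f \<in> H (p + 1)" using closed f .
  show "End_d d p (f + g) = End_d d p f + End_d d p g" for g
    by (intro ext poly_mapping_eqI) (simp add: End_d_def klinearD[OF d] lookup_add lookup_minus algebra_simps)
  show "End_d d p (End_scale c f) = End_scale c (End_d d p f)" for c
    by (intro ext poly_mapping_eqI)
      (simp add: End_d_def End_scale_def klinearD[OF d] lookup_minus algebra_simps)
  have "diter (End_d d) (2 * N - 1) p f = (\<lambda>x. 0)"
    by (rule sandwich_span_vanishes[OF diter_End_d_sandwich_span[OF d] d \<open>klinear f\<close> nil]) arith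
  then show "diter (End_d d) (2 * N - 1) p f = 0" by (simp add: zero_fun_def)
qed

lemma End_d_comp:
  assumes "klinear f"
  shows "End_d d (p + q) (f \<circ> g) = (End_d d p f \<circ> g) + End_scale (psign p) (f \<circ> End_d d q g)"
  by (auto intro!: ext poly_mapping_eqI simp: End_d_def End_scale_def klinearD[OF assms]
      psign_add lookup_add lookup_minus algebra_simps)

lemma K_dga_End:
  assumes d: "d \<in> EndH w 1" and nil: "d ^^ N = (\<lambda>x. 0)"
  shows "K_dga End_scale (EndH w) (\<circ>) (End_d d) (2 * N - 1)"
  unfolding K_dga_def
proof (intro conjI)
  show "graded_space End_scale (EndH w)"
    by (rule graded_space_EndH_family) (auto intro: EndH_zero EndH_add EndH_scale)
  show "K_differential End_scale (EndH w) (End_d d) (2 * N - 1)"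
    by (rule K_differential_End_d[OF d nil]) (auto intro: End_d_EndH[OF d])
  show "\<forall>p q. \<forall>f\<in>EndH w p. \<forall>g\<in>EndH w q. f \<circ> g \<in> EndH w (p + q)"
    using EndH_comp by (auto simp: comp_def)
  show "\<forall>p q. \<forall>f\<in>EndH w p. \<forall>f'\<in>EndH w p. \<forall>g\<in>EndH w q. (f + f') \<circ> g = (f \<circ> g) + (f' \<circ> g)"
    by (auto simp: fun_eq_iff)
  show "\<forall>p q. \<forall>f\<in>EndH w p. \<forall>g\<in>EndH w q. \<forall>g'\<in>EndH w q. f \<circ> (g + g') = (f \<circ> g) + (f \<circ> g')"
    by (auto simp: fun_eq_iff klinearD[OF EndH_lin])
  show "\<forall>p q c. \<forall>f\<in>EndH w p. \<forall>g\<in>EndH w q.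
      End_scale c f \<circ> g = End_scale c (f \<circ> g) \<and> f \<circ> End_scale c g = End_scale c (f \<circ> g)"
    by (auto simp: fun_eq_iff End_scale_def klinearD[OF EndH_lin])
  show "\<forall>p q r. \<forall>f\<in>EndH w p. \<forall>g\<in>EndH w q. \<forall>h\<in>EndH w r. (f \<circ> g) \<circ> h = f \<circ> (g \<circ> h)"
    by (simp add: comp_assoc)
  show "\<forall>p q. \<forall>f\<in>EndH w p. \<forall>g\<in>EndH w q.
      End_d d (p + q) (f \<circ> g) = (End_d d p f \<circ> g) + End_scale (psign p) (f \<circ> End_d d q g)"
    using End_d_comp EndH_lin by blast
qed

section \<open>Tensor products of maps and the interchange laws\<close>

lemma lookup_tensor:
  "Poly_Mapping.lookup (tensor x y) ab = Poly_Mapping.lookup x (fst ab) * Poly_Mapping.lookup y (snd ab)"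
proof -
  obtain a b where ab: "ab = (a, b)" by (cases ab)
  have "Poly_Mapping.lookup (tensor x y) (a, b)
      = (\<Sum>a'\<in>Poly_Mapping.keys x. if a' = a then
           (\<Sum>b'\<in>Poly_Mapping.keys y. if b' = b then Poly_Mapping.lookup x a' * Poly_Mapping.lookup y b' else 0)
         else 0)"
    unfolding tensor_def lookup_sum lookup_single when_def prod.inject
    by (intro sum.cong refl) simp
  then show ?thesis by (simp add: ab in_keys_iff)
qed

lemma klinear_tensor_left: "klinear (\<lambda>x. tensor x y)"
  unfolding klinear_def by (auto intro!: poly_mapping_eqI simp: lookup_tensor lookup_add algebra_simps)

lemma klinear_tensor_right: "klinear (\<lambda>y. tensor x y)"
  unfolding klinear_def by (auto intro!: poly_mapping_eqI simp: lookup_tensor lookup_add algebra_simps)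

lemma tensor_bvec: "tensor (bvec a) (bvec b) = bvec (a, b)"
  by (rule poly_mapping_eqI) (auto simp: lookup_tensor bvec_def lookup_single when_def)

lemma lin_ext_sum_superset:
  assumes "finite K" "Poly_Mapping.keys v \<subseteq> K"
  shows "lin_ext g v = (\<Sum>i\<in>K. smult (Poly_Mapping.lookup v i) (g i))"
  unfolding lin_ext_def
  by (rule sum.mono_neutral_left) (use assms in \<open>auto simp: in_keys_iff\<close>)

lemma klinear_lin_ext: "klinear (lin_ext g)"
  unfolding klinear_def
proof (intro conjI allI)
  fix x y :: "'a \<Rightarrow>\<^sub>0 'b"
  let ?K = "Poly_Mapping.keys x \<union> Poly_Mapping.keys y"
  have "lin_ext g (x + y) = (\<Sum>i\<in>?K. smult (Poly_Mapping.lookup (x + y) i) (g i))"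
    using keys_add[of x y] by (intro lin_ext_sum_superset) auto
  also have "\<dots> = (\<Sum>i\<in>?K. smult (Poly_Mapping.lookup x i) (g i))
      + (\<Sum>i\<in>?K. smult (Poly_Mapping.lookup y i) (g i))"
    by (simp add: lookup_add smult_add_left sum.distrib)
  also have "\<dots> = lin_ext g x + lin_ext g y"
    using lin_ext_sum_superset[of ?K x g] lin_ext_sum_superset[of ?K y g] by simp
  finally show "lin_ext g (x + y) = lin_ext g x + lin_ext g y" .
next
  fix c and x :: "'a \<Rightarrow>\<^sub>0 'b"
  have "lin_ext g (smult c x)
      = (\<Sum>i\<in>Poly_Mapping.keys x. smult (Poly_Mapping.lookup (smult c x) i) (g i))"
    by (rule lin_ext_sum_superset) (auto simp: in_keys_iff)
  then show "lin_ext g (smult c x) = smult c (lin_ext g x)"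
    by (simp add: lin_ext_def smult_sum)
qed

lemma klinear_tmap: "klinear (tmap w q F G)"
  by (simp add: tmap_def klinear_lin_ext)

lemma tmap_bvec:
  "tmap w q F G (bvec (a, b)) = smult (psign (q * w a)) (tensor (F (bvec a)) (G (bvec b)))"
  by (simp add: tmap_def lin_ext_def bvec_def)

lemma tmap_tensor:
  assumes F: "klinear F" and G: "klinear G" and u: "u \<in> hom w n"
  shows "tmap w q F G (tensor u v) = smult (psign (q * n)) (tensor (F u) (G v))"
proof -
  have on_bvec: "tmap w q F G (tensor (bvec a) v) = smult (psign (q * w a)) (tensor (F (bvec a)) (G v))" for a
  proof (rule klinear_eq_on_bvec[where v = v])
    show "klinear (\<lambda>v. tmap w q F G (tensor (bvec a) v))"
      by (rule klinear_comp[OF klinear_tmap klinear_tensor_right])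
    show "klinear (\<lambda>v. smult (psign (q * w a)) (tensor (F (bvec a)) (G v)))"
      by (rule klinear_scale, rule klinear_comp[OF klinear_tensor_right G])
  qed (simp add: tensor_bvec tmap_bvec)
  let ?K = "Poly_Mapping.keys u"
  have "tmap w q F G (tensor u v)
      = tmap w q F G (tensor (\<Sum>a\<in>?K. smult (Poly_Mapping.lookup u a) (bvec a)) v)"
    by (simp add: bvec_expansion)
  also have "\<dots> = (\<Sum>a\<in>?K. smult (Poly_Mapping.lookup u a) (tmap w q F G (tensor (bvec a) v)))"
    by (simp add: klinearD[OF klinear_tensor_left] klinearD[OF klinear_tmap])
  also have "\<dots> = (\<Sum>a\<in>?K. smult (Poly_Mapping.lookup u a) (smult (psign (q * n)) (tensor (F (bvec a)) (G v))))"
    using u by (intro sum.cong) (auto simp: on_bvec hom_def)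
  also have "\<dots> = smult (psign (q * n)) (tensor (F (\<Sum>a\<in>?K. smult (Poly_Mapping.lookup u a) (bvec a))) (G v))"
    by (simp add: klinearD[OF F] klinearD[OF klinear_tensor_left] smult_sum mult.commute)
  finally show ?thesis by (simp add: bvec_expansion)
qed

lemma tmap_lincomb_left:
  assumes "\<And>a. F (bvec a) = F1 (bvec a) + smult c (F2 (bvec a))"
  shows "tmap w q F G z = tmap w q F1 G z + smult c (tmap w q F2 G z)"
proof (rule klinear_eq_on_bvec[OF klinear_tmap klinear_add[OF klinear_tmap klinear_scale[OF klinear_tmap]]])
  fix i
  show "tmap w q F G (bvec i) = tmap w q F1 G (bvec i) + smult c (tmap w q F2 G (bvec i))"
    by (cases i) (simp add: tmap_bvec assms klinearD[OF klinear_tensor_left] smult_add mult.commute)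
qed

lemma tmap_lincomb_right:
  assumes "\<And>b. G (bvec b) = G1 (bvec b) + smult c (G2 (bvec b))"
  shows "tmap w q F G z = tmap w q F G1 z + smult c (tmap w q F G2 z)"
proof (rule klinear_eq_on_bvec[OF klinear_tmap klinear_add[OF klinear_tmap klinear_scale[OF klinear_tmap]]])
  fix i
  show "tmap w q F G (bvec i) = tmap w q F G1 (bvec i) + smult c (tmap w q F G2 (bvec i))"
    by (cases i) (simp add: tmap_bvec assms klinearD[OF klinear_tensor_right] smult_add mult.commute)
qed

lemma tmap_zero_left: "tmap w q (\<lambda>x. 0) G z = 0"
  by (rule klinear_eq_on_bvec[OF klinear_tmap klinear_zero])
    (auto simp: tmap_bvec klinearD(3)[OF klinear_tensor_left])

lemma tmap_zero_right: "tmap w q F (\<lambda>x. 0) z = 0"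
  by (rule klinear_eq_on_bvec[OF klinear_tmap klinear_zero])
    (auto simp: tmap_bvec klinearD(3)[OF klinear_tensor_right])

lemma tmap_id_comp:
  fixes w :: "'b \<Rightarrow> int" and f g :: "('b \<Rightarrow>\<^sub>0 'k::field) \<Rightarrow> ('b \<Rightarrow>\<^sub>0 'k)"
    and z :: "'b \<times> 'b \<Rightarrow>\<^sub>0 'k"
  assumes "klinear f" and "klinear g"
  shows "tmap w p id f (tmap w q id g z) = tmap w (p + q) id (\<lambda>x. f (g x)) z"
proof (rule klinear_eq_on_bvec[OF klinear_comp[OF klinear_tmap klinear_tmap] klinear_tmap])
  fix i :: "'b \<times> 'b"
  show "tmap w p id f (tmap w q id g (bvec i)) = tmap w (p + q) id (\<lambda>x. f (g x)) (bvec i)"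
    by (cases i) (simp add: tmap_bvec klinearD[OF klinear_tmap] tmap_tensor[OF klinear_id assms(1) bvec_hom]
        psign_def even_add even_mult_iff distrib_left distrib_right)
qed

lemma tmap_comp_id:
  fixes w :: "'b \<Rightarrow> int" and f g :: "('b \<Rightarrow>\<^sub>0 'k::field) \<Rightarrow> ('b \<Rightarrow>\<^sub>0 'k)"
    and z :: "'b \<times> 'b \<Rightarrow>\<^sub>0 'k"
  assumes "f \<in> EndH w p" and "g \<in> EndH w q"
  shows "tmap w 0 f id (tmap w 0 g id z) = tmap w 0 (\<lambda>x. f (g x)) id z"
proof (rule klinear_eq_on_bvec[OF klinear_comp[OF klinear_tmap klinear_tmap] klinear_tmap])
  fix i :: "'b \<times> 'b"
  obtain a b where i: "i = (a, b)" by (cases i)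
  show "tmap w 0 f id (tmap w 0 g id (bvec i)) = tmap w 0 (\<lambda>x. f (g x)) id (bvec i)"
    using tmap_tensor[OF EndH_lin[OF assms(1)] klinear_id EndH_hom[OF assms(2) bvec_hom], where q = 0 and v = "bvec b"]
    by (simp add: i tmap_bvec psign_def)
qed

lemma tmap_id_tmap_commute:
  fixes w :: "'b \<Rightarrow> int" and f g :: "('b \<Rightarrow>\<^sub>0 'k::field) \<Rightarrow> ('b \<Rightarrow>\<^sub>0 'k)"
    and z :: "'b \<times> 'b \<Rightarrow>\<^sub>0 'k"
  assumes f: "f \<in> EndH w p" and g: "g \<in> EndH w q"
  shows "tmap w p id f (tmap w 0 g id z) = smult (psign (p * q)) (tmap w 0 g id (tmap w p id f z))"
proof (rule klinear_eq_on_bvec[OF klinear_comp[OF klinear_tmap klinear_tmap]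
      klinear_scale[OF klinear_comp[OF klinear_tmap klinear_tmap]]])
  fix i :: "'b \<times> 'b"
  obtain a b where i: "i = (a, b)" by (cases i)
  show "tmap w p id f (tmap w 0 g id (bvec i)) = smult (psign (p * q)) (tmap w 0 g id (tmap w p id f (bvec i)))"
    using tmap_tensor[OF klinear_id EndH_lin[OF f] EndH_hom[OF g bvec_hom], where q = p and v = "bvec b"]
      tmap_tensor[OF EndH_lin[OF g] klinear_id bvec_hom, where q = 0 and v = "f (bvec b)"]
    by (simp add: i tmap_bvec klinearD[OF klinear_tmap] psign_def even_add even_mult_iff distrib_left)
qed

lemma tmap_tmap_id_commute:
  fixes w :: "'b \<Rightarrow> int" and f g :: "('b \<Rightarrow>\<^sub>0 'k::field) \<Rightarrow> ('b \<Rightarrow>\<^sub>0 'k)"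
    and z :: "'b \<times> 'b \<Rightarrow>\<^sub>0 'k"
  assumes f: "f \<in> EndH w p" and g: "g \<in> EndH w q"
  shows "tmap w 0 f id (tmap w q id g z) = smult (psign (p * q)) (tmap w q id g (tmap w 0 f id z))"
  using tmap_id_tmap_commute[OF g f, of z] by (simp add: psign_sq mult.commute)

section \<open>Coderivations\<close>

lemma Coder_EndH: "Coder w D p \<subseteq> EndH w p"
  by (auto simp: Coder_def)

lemma CoderD: "f \<in> Coder w D p \<Longrightarrow> D (f x) = tmap w p id f (D x) + tmap w 0 f id (D x)"
  by (simp add: Coder_def)

lemma Coder_zero: "klinear D \<Longrightarrow> (\<lambda>x. 0) \<in> Coder w D p"
  by (simp add: Coder_def EndH_zero klinearD(3) tmap_zero_left tmap_zero_right)

lemma Coder_add: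
  assumes D: "klinear D" and f: "f \<in> Coder w D p" and g: "g \<in> Coder w D p"
  shows "(\<lambda>x. f x + g x) \<in> Coder w D p"
proof -
  have "D (f x + g x) = tmap w p id (\<lambda>x. f x + g x) (D x) + tmap w 0 (\<lambda>x. f x + g x) id (D x)" for x
    using tmap_lincomb_right[of "\<lambda>x. f x + g x" f 1 g w p id "D x"]
      tmap_lincomb_left[of "\<lambda>x. f x + g x" f 1 g w 0 id "D x"]
    by (simp add: klinearD(1)[OF D] CoderD[OF f] CoderD[OF g] algebra_simps)
  then show ?thesis using EndH_add f g Coder_EndH by (auto simp: Coder_def)
qed

lemma Coder_scale:
  assumes D: "klinear D" and f: "f \<in> Coder w D p"
  shows "(\<lambda>x. smult c (f x)) \<in> Coder w D p"
proof -
  have "D (smult c (f x)) = tmap w p id (\<lambda>x. smult c (f x)) (D x) + tmap w 0 (\<lambda>x. smult c (f x)) id (D x)" for x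
    using tmap_lincomb_right[of "\<lambda>x. smult c (f x)" "\<lambda>x. 0" c f w p id "D x"]
      tmap_lincomb_left[of "\<lambda>x. smult c (f x)" "\<lambda>x. 0" c f w 0 id "D x"]
    by (simp add: klinearD(2)[OF D] CoderD[OF f] smult_add tmap_zero_left tmap_zero_right)
  then show ?thesis using EndH_scale f Coder_EndH by (auto simp: Coder_def)
qed

lemma Coder_bracket:
  fixes w :: "'b \<Rightarrow> int" and D :: "('b \<Rightarrow>\<^sub>0 'k::field) \<Rightarrow> ('b \<times> 'b \<Rightarrow>\<^sub>0 'k)"
  assumes D: "klinear D" and f: "f \<in> Coder w D p" and g: "g \<in> Coder w D q"
  shows "End_bracket p q f g \<in> Coder w D (p + q)"
proof -
  have fE: "f \<in> EndH w p" and gE: "g \<in> EndH w q" using f g Coder_EndH by blast+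
  have fl: "klinear f" and gl: "klinear g" using fE gE EndH_lin by blast+
  let ?s = "psign (p * q) :: 'k"
  have "End_bracket p q f g \<in> EndH w (p + q)"
    unfolding End_bracket_def
    using EndH_comp[OF fE gE] EndH_comp[OF gE fE] by (intro EndH_diff EndH_scale) (simp_all add: add.commute)
  moreover have "D (End_bracket p q f g x)
      = tmap w (p + q) id (End_bracket p q f g) (D x) + tmap w 0 (End_bracket p q f g) id (D x)" for x
  proof -
    define left_fg where "left_fg = tmap w (p + q) id (\<lambda>x. f (g x)) (D x)"
    define left_gf where "left_gf = tmap w (p + q) id (\<lambda>x. g (f x)) (D x)"
    define right_fg where "right_fg = tmap w 0 (\<lambda>x. f (g x)) id (D x)"
    define right_gf where "right_gf = tmap w 0 (\<lambda>x. g (f x)) id (D x)"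
    define mixed_gf where "mixed_gf = tmap w 0 g id (tmap w p id f (D x))"
    define mixed_fg where "mixed_fg = tmap w q id g (tmap w 0 f id (D x))"
    have fg: "D (f (g x)) = left_fg + smult ?s mixed_gf + smult ?s mixed_fg + right_fg"
      unfolding left_fg_def right_fg_def mixed_gf_def mixed_fg_def
      by (simp add: CoderD[OF f] CoderD[OF g] klinearD(1)[OF klinear_tmap] tmap_id_comp[OF fl gl]
          tmap_comp_id[OF fE gE] tmap_id_tmap_commute[OF fE gE] tmap_tmap_id_commute[OF fE gE] add_ac)
    have gf: "D (g (f x)) = left_gf + mixed_fg + mixed_gf + right_gf"
      unfolding left_gf_def right_gf_def mixed_gf_def mixed_fg_def
      by (simp add: CoderD[OF f] CoderD[OF g] klinearD(1)[OF klinear_tmap] tmap_id_comp[OF gl fl]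
          tmap_comp_id[OF gE fE] add_ac)
    have bracket_bvec: "End_bracket p q f g (bvec b) = f (g (bvec b)) + smult (- ?s) (g (f (bvec b)))" for b
      by (simp add: End_bracket_def smult_minus_left)
    have left: "tmap w (p + q) id (End_bracket p q f g) (D x) = left_fg + smult (- ?s) left_gf"
      unfolding left_fg_def left_gf_def by (rule tmap_lincomb_right) (rule bracket_bvec)
    have right: "tmap w 0 (End_bracket p q f g) id (D x) = right_fg + smult (- ?s) right_gf"
      unfolding right_fg_def right_gf_def by (rule tmap_lincomb_left) (rule bracket_bvec)
    have "D (End_bracket p q f g x) = D (f (g x)) - smult ?s (D (g (f x)))"
      by (simp add: End_bracket_def klinearD[OF D])
    then show ?thesis
      unfolding left right fg gf by (simp add: smult_add smult_minus_left algebra_simps)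
  qed
  ultimately show ?thesis by (simp add: Coder_def)
qed

lemma End_bracket_antisym:
  fixes f g :: "('b \<Rightarrow>\<^sub>0 'k::field) \<Rightarrow> ('b \<Rightarrow>\<^sub>0 'k)"
  shows "End_bracket p q f g = - End_scale (psign (p * q)) (End_bracket q p g f)"
  by (auto intro!: ext poly_mapping_eqI simp: End_bracket_def End_scale_def mult.commute[of q p]
      psign_sq_left lookup_minus algebra_simps)

lemma End_bracket_jacobi:
  fixes f g h :: "('b \<Rightarrow>\<^sub>0 'k::field) \<Rightarrow> ('b \<Rightarrow>\<^sub>0 'k)"
  assumes "klinear f" "klinear g" "klinear h"
  shows "End_bracket p (q + r) f (End_bracket q r g h)
    = End_bracket (p + q) r (End_bracket p q f g) h
      + End_scale (psign (p * q)) (End_bracket q (p + r) g (End_bracket p r f h))"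
proof -
  have qp: "psign (q * p) = (psign (p * q) :: 'k)" by (simp add: mult.commute)
  show ?thesis
    by (auto intro!: ext poly_mapping_eqI simp: End_bracket_def End_scale_def klinearD[OF assms(1)]
        klinearD[OF assms(2)] klinearD[OF assms(3)] distrib_left distrib_right psign_add qp
        psign_sq_left lookup_add lookup_minus algebra_simps)
qed

lemma End_d_eq_bracket: "End_d d p f = End_bracket 1 p d f"
  by (simp add: End_d_def End_bracket_def)

text \<open>The Leibniz rule is the Jacobi identity for the bracket with d.\<close>
lemma End_d_bracket:
  assumes "klinear d" "klinear f" "klinear g"
  shows "End_d d (p + q) (End_bracket p q f g)
    = End_bracket (p + 1) q (End_d d p f) g + End_scale (psign p) (End_bracket p (q + 1) f (End_d d q g))"
  using End_bracket_jacobi[OF assms, of 1 p q] by (simp add: End_d_eq_bracket add.commute)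

lemma K_dgla_Coder:
  assumes D: "klinear D" and d: "d \<in> Coder w D 1" and nil: "d ^^ N = (\<lambda>x. 0)"
  shows "K_dgla End_scale (Coder w D) End_bracket (End_d d) (2 * N - 1)"
  unfolding K_dgla_def
proof (intro conjI)
  have lin: "klinear f" if "f \<in> Coder w D p" for f p
    using that Coder_EndH EndH_lin by blast
  show "graded_space End_scale (Coder w D)"
    by (rule graded_space_EndH_family[OF Coder_EndH])
      (auto intro: Coder_zero[OF D] Coder_add[OF D] Coder_scale[OF D])
  show "K_differential End_scale (Coder w D) (End_d d) (2 * N - 1)"
    using Coder_bracket[OF D d]
    by (intro K_differential_End_d[OF set_mp[OF Coder_EndH d] nil Coder_EndH])
      (auto simp: End_d_eq_bracket add.commute)
  show "\<forall>p q. \<forall>f\<in>Coder w D p. \<forall>g\<in>Coder w D q. End_bracket p q f g \<in> Coder w D (p + q)"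
    using Coder_bracket[OF D] by blast
  show "\<forall>p q. \<forall>f\<in>Coder w D p. \<forall>f'\<in>Coder w D p. \<forall>g\<in>Coder w D q.
      End_bracket p q (f + f') g = End_bracket p q f g + End_bracket p q f' g"
    and "\<forall>p q. \<forall>f\<in>Coder w D p. \<forall>g\<in>Coder w D q. \<forall>g'\<in>Coder w D q.
      End_bracket p q f (g + g') = End_bracket p q f g + End_bracket p q f g'"
    and "\<forall>p q c. \<forall>f\<in>Coder w D p. \<forall>g\<in>Coder w D q.
      End_bracket p q (End_scale c f) g = End_scale c (End_bracket p q f g) \<and>
      End_bracket p q f (End_scale c g) = End_scale c (End_bracket p q f g)"
    by (auto intro!: ext poly_mapping_eqI simp: End_bracket_def End_scale_def klinearD[OF lin]
        lookup_add lookup_minus algebra_simps)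
  show "\<forall>p q. \<forall>f\<in>Coder w D p. \<forall>g\<in>Coder w D q.
      End_bracket p q f g = - End_scale (psign (p * q)) (End_bracket q p g f)"
    using End_bracket_antisym by blast
  show "\<forall>p q r. \<forall>f\<in>Coder w D p. \<forall>g\<in>Coder w D q. \<forall>h\<in>Coder w D r.
      End_bracket p (q + r) f (End_bracket q r g h)
        = End_bracket (p + q) r (End_bracket p q f g) h
          + End_scale (psign (p * q)) (End_bracket q (p + r) g (End_bracket p r f h))"
    using End_bracket_jacobi lin by blast
  show "\<forall>p q. \<forall>f\<in>Coder w D p. \<forall>g\<in>Coder w D q.
      End_d d (p + q) (End_bracket p q f g)
        = End_bracket (p + 1) q (End_d d p f) g + End_scale (psign p) (End_bracket p (q + 1) f (End_d d q g))"
    using End_d_bracket lin[OF d] lin by blast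
qed

theorem mainTheorem4:
  fixes bdeg :: "'b \<Rightarrow> int"
    and Delta :: "('b \<Rightarrow>\<^sub>0 'k::field_char_0) \<Rightarrow> ('b \<times> 'b \<Rightarrow>\<^sub>0 'k)"
    and delta :: "('b \<Rightarrow>\<^sub>0 'k) \<Rightarrow> ('b \<Rightarrow>\<^sub>0 'k)"
    and N :: nat
  assumes "N_codifferential bdeg Delta delta N"
  shows "K_dga End_scale (EndH bdeg) (\<circ>) (End_d delta) (2 * N - 1)
       \<and> K_dgla End_scale (Coder bdeg Delta) End_bracket (End_d delta) (2 * N - 1)"
proof -
  have Delta: "klinear Delta" and delta: "delta \<in> Coder bdeg Delta 1" and nil: "delta ^^ N = (\<lambda>x. 0)"
    using assms by (auto simp: N_codifferential_def graded_coalgebra_def)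
  then show ?thesis
    using K_dga_End[OF set_mp[OF Coder_EndH delta] nil] K_dgla_Coder[OF Delta delta nil] by blast
qed

end
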